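(* Let $r_0\in\mathbb{R}^7$ and let $\vartheta:\mathbb{R}^7\times\mathbb{R}^2\to\mathbb{R}$ satisfy: (i) for every $z\in\mathbb{R}^2$, $\vartheta(r_0,z)\le0$ iff there exist $t_f\ge0$ and $(\mathbf r,\mathbf u)\in\Pi^{\mathcal K,\mathcal C}_{r_0,t_f}$ with $J(\mathbf r(1),t_f)\le z$; (ii) $z\le z'$ implies $\vartheta(r_0,z)\ge\vartheta(r_0,z')$. With $z^*(r_0)$ the utopian point, define for $\mu\in[0,1]^2$ $\Theta_{r_0}(\mu):=\inf\{\tau\ge0:\vartheta(r_0,z^*(r_0)+\mu\tau)\le0\ \text{and}\ \tau<m_{\mathrm{prop}}/\mu_1\}\in[0,\infty]$ and $\Sigma_{r_0}:=\{z^*(r_0)+\mu\,\Theta_{r_0}(\mu):\mu\in[0,1]^2,\ \mu_1+\mu_2=1\}$. Then the Pareto front $\mathcal F$ (the set of Pareto optimal values) is a subset of $\Sigma_{r_0}$.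
   Context: Fixed data: rotation rate $\Omega\ge0$, exhaust velocity $v_e>0$, $m_{\mathrm{dry}},m_{\mathrm{prop}}>0$, $m_{\min}:=m_{\mathrm{dry}}$, $m_{\max}:=m_{\mathrm{dry}}+m_{\mathrm{prop}}$, radii $0<\rho_{\min}<\rho_{\max}$, a potential $U:\mathbb{R}^3\to\mathbb{R}$ with partials $U_x,U_y,U_z$, a control set $\mathcal U\subset\mathbb{R}^3$. For $r=(x,y,z,v_x,v_y,v_z,m)\in\mathbb{R}^7$, $u\in\mathcal U$: $\tilde f(r,u)=(v_x,v_y,v_z,U_x+\Omega^2x+2\Omega v_y+u_x/m,\ U_y+\Omega^2y-2\Omega v_x+u_y/m,\ U_z+u_z/m,\ -|u|/v_e)$, and $f(r,u,t_f):=t_f\tilde f(r,u)$. $\mathcal U_{ad}$: Lebesgue measurable $\mathcal U$-valued functions. $\mathcal K_0:=\{r:\sqrt{x^2+y^2+z^2}\in[\rho_{\min},\rho_{\max}],\ m\in(m_{\min},m_{\max}]\}$, $\mathcal K:=\{r\in\mathcal K_0:\exists u\in\mathcal U,\ \tilde f(r,u)\cdot\eta_r<0\}$ ($\eta_r$ exterior normal to $\mathcal K$ at $r$), $\mathcal C:=\{r\in\mathcal K:|r_{\mathrm{target}}-r|<\epsilon\}$ for given $r_{\mathrm{target}}$, $\epsilon>0$, assumed nonempty closed. $\Pi_{r_0,t_f}$: pairs $(\mathbf r,\mathbf u)$, $\mathbf r\in W^{1,1}([0,1];\mathbb{R}^7)$, $\mathbf u\in\mathcal U_{ad}$, $\dot{\mathbf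 r}=f(\mathbf r,\mathbf u,t_f)$ on $[0,1]$, $\mathbf r(0)=r_0$; $\Pi^{\mathcal K,\mathcal C}_{r_0,t_f}$: those with $\mathbf r(s)\in\mathcal K$ for all $s$ and $\mathbf r(1)$ in the interior of $\mathcal C$; $\pi:=\{(r_0,t_f)\in\mathcal K\times[0,\infty):\Pi^{\mathcal K,\mathcal C}_{r_0,t_f}\neq\emptyset\}$. $J(r_f,t_f):=(-(r_f)_7,\ t_f)$. Orders on $\mathbb{R}^2$ are componentwise ($<$ meaning strict in every component). Utopian point: $z^*_i(r_0):=\inf\{J_i(\mathbf r(1),t_f):(r_0,t_f)\in\pi,(\mathbf r,\mathbf u)\in\Pi^{\mathcal K,\mathcal C}_{r_0,t_f}\}$. An admissible trajectory $(\mathbf r,\mathbf u)\in\Pi^{\mathcal K,\mathcal C}_{r_0,t_f}$ is dominated by $(\mathbf x,\mathbf v)\in\Pi^{\mathcal K,\mathcal C}_{r_0,\hat t_f}$ if $J(\mathbf x(1),\hat t_f)\le J(\mathbf r(1),t_f)$ and $J(\mathbf x(1),\hat t_f)\ne J(\mathbf r(1),t_f)$. The Pareto front $\mathcal F$ is the set of values $J(\mathbf r(1),t_f)$ of admissible trajectories (over all $t_f\ge0$) that are not dominated by any admissible trajectory from $r_0$; equivalently, values $z$ of admissible trajectories such that no admissible value dominates $z$. *)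

theory Defs
  imports "HOL-Analysis.Analysis"
begin

text \<open>Fixed problem data (rotation rate, exhaust velocity, masses, radii,
  partials of the potential, control set, target and tolerance).\<close>
record params =
  Om :: real
  ve :: real
  mdry :: real
  mprop :: real
  rhomin :: real
  rhomax :: real
  Ux :: "real^3 \<Rightarrow> real"
  Uy :: "real^3 \<Rightarrow> real"
  Uz :: "real^3 \<Rightarrow> real"
  Uset :: "(real^3) set"
  rtarget :: "real^7"
  eps :: real

definition mmin :: "params \<Rightarrow> real" where "mmin P = mdry P"
definition mmax :: "params \<Rightarrow> real" where "mmax P = mdry P + mprop P"

text \<open>Position part (x,y,z) of a state r = (x,y,z,vx,vy,vz,m).\<close>
definition pos :: "real^7 \<Rightarrow> real^3" where
  "pos r = vector [r$1, r$2, r$3]"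

definition ftilde :: "params \<Rightarrow> real^7 \<Rightarrow> real^3 \<Rightarrow> real^7" where
  "ftilde P r u = vector
     [ r$4, r$5, r$6,
       Ux P (pos r) + (Om P)^2 * r$1 + 2 * Om P * r$5 + u$1 / r$7,
       Uy P (pos r) + (Om P)^2 * r$2 - 2 * Om P * r$4 + u$2 / r$7,
       Uz P (pos r) + u$3 / r$7,
       - norm u / ve P ]"

definition fdyn :: "params \<Rightarrow> real^7 \<Rightarrow> real^3 \<Rightarrow> real \<Rightarrow> real^7" where
  "fdyn P r u tf = tf *\<^sub>R ftilde P r u"

definition Uad :: "params \<Rightarrow> (real \<Rightarrow> real^3) set" where
  "Uad P = {u. u \<in> borel_measurable (lebesgue_on {0..1}) \<and> (\<forall>s\<in>{0..1}. u s \<in> Uset P)}"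

definition K0 :: "params \<Rightarrow> (real^7) set" where
  "K0 P = {r. norm (pos r) \<in> {rhomin P .. rhomax P} \<and> r$7 \<in> {mmin P <.. mmax P}}"

definition ext_normals :: "params \<Rightarrow> real^7 \<Rightarrow> (real^7) set" where
  "ext_normals P r =
     (if norm (pos r) = rhomax P
      then {vector [r$1 / norm (pos r), r$2 / norm (pos r), r$3 / norm (pos r), 0, 0, 0, 0]} else {})
   \<union> (if norm (pos r) = rhomin P
      then {vector [- r$1 / norm (pos r), - r$2 / norm (pos r), - r$3 / norm (pos r), 0, 0, 0, 0]} else {})
   \<union> (if r$7 = mmax P then {axis 7 1} else {})"

definition Kset :: "params \<Rightarrow> (real^7) set" where
  "Kset P = {r \<in> K0 P. \<exists>u\<in>Uset P. \<forall>\<eta>\<in>ext_normals P r. ftilde P r u \<bullet> \<eta> < 0}"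

definition Cset :: "params \<Rightarrow> (real^7) set" where
  "Cset P = {r \<in> Kset P. norm (rtarget P - r) < eps P}"

text \<open>\<open>\<Pi>_{r0,tf}\<close>: W^{1,1} solutions on [0,1] of \<open>r' = f(r,u,tf)\<close>, r(0)=r0,
  expressed as: the right-hand side is Lebesgue integrable on [0,1] and r is its
  indefinite integral starting at r0.\<close>
definition Pi_traj :: "params \<Rightarrow> real^7 \<Rightarrow> real \<Rightarrow> ((real \<Rightarrow> (real^7)) \<times> (real \<Rightarrow> (real^3))) set" where
  "Pi_traj P r0 tf = {(r, u). u \<in> Uad P \<and>
      (\<lambda>s. fdyn P (r s) (u s) tf) absolutely_integrable_on {0..1} \<and>
      (\<forall>s\<in>{0..1}. r s = r0 + integral {0..s} (\<lambda>\<sigma>. fdyn P (r \<sigma>) (u \<sigma>) tf)) \<and>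
      r 0 = r0}"

definition Pi_KC :: "params \<Rightarrow> real^7 \<Rightarrow> real \<Rightarrow> ((real \<Rightarrow> (real^7)) \<times> (real \<Rightarrow> (real^3))) set" where
  "Pi_KC P r0 tf = {(r, u) \<in> Pi_traj P r0 tf. (\<forall>s\<in>{0..1}. r s \<in> Kset P) \<and> r 1 \<in> interior (Cset P)}"

definition pi_set :: "params \<Rightarrow> ((real^7) \<times> real) set" where
  "pi_set P = {(r0, tf). r0 \<in> Kset P \<and> tf \<ge> 0 \<and> Pi_KC P r0 tf \<noteq> {}}"

definition Jobj :: "real^7 \<Rightarrow> real \<Rightarrow> real^2" where
  "Jobj rf tf = vector [- rf$7, tf]"

definition utopia :: "params \<Rightarrow> real^7 \<Rightarrow> real^2" where
  "utopia P r0 = (\<chi> i. Inf {Jobj (r 1) tf $ i | tf r u. (r0, tf) \<in> pi_set P \<and> (r, u) \<in> Pi_KC P r0 tf})"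

definition adm_values :: "params \<Rightarrow> real^7 \<Rightarrow> (real^2) set" where
  "adm_values P r0 = {Jobj (r 1) tf | tf r u. tf \<ge> 0 \<and> (r, u) \<in> Pi_KC P r0 tf}"

definition pareto_front :: "params \<Rightarrow> real^7 \<Rightarrow> (real^2) set" where
  "pareto_front P r0 = {z \<in> adm_values P r0. \<not> (\<exists>z'\<in>adm_values P r0. z' \<le> z \<and> z' \<noteq> z)}"

text \<open>\<open>\<Theta>_{r0}(\<mu>)\<close>, valued in [0,\<infinity>]; the constraint \<open>\<tau> < m_prop/\<mu>_1\<close> is written
  \<open>\<tau> \<mu>_1 < m_prop\<close> so that it is vacuous for \<open>\<mu>_1 = 0\<close> (m_prop/0 = \<infinity>).\<close>
definition Theta :: "params \<Rightarrow> (real^7 \<Rightarrow> real^2 \<Rightarrow> real) \<Rightarrow> real^7 \<Rightarrow> real^2 \<Rightarrow> ereal" where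
  "Theta P th r0 \<mu> = Inf (ereal ` {\<tau>. \<tau> \<ge> 0 \<and> th r0 (utopia P r0 + \<tau> *\<^sub>R \<mu>) \<le> 0 \<and> \<tau> * \<mu>$1 < mprop P})"

definition Sigma_set :: "params \<Rightarrow> (real^7 \<Rightarrow> real^2 \<Rightarrow> real) \<Rightarrow> real^7 \<Rightarrow> (real^2) set" where
  "Sigma_set P th r0 = {utopia P r0 + real_of_ereal (Theta P th r0 \<mu>) *\<^sub>R \<mu> | \<mu>.
      (\<forall>i. \<mu>$i \<in> {0..1}) \<and> \<mu>$1 + \<mu>$2 = 1 \<and> Theta P th r0 \<mu> < \<infinity>}"

end

theory Submission
  imports Defs
begin

text \<open>A Pareto optimal value z dominates the utopian point z*, so z = z* + s \<mu> with
  s \<ge> 0 and \<mu> on the unit simplex. By (i), z* + s \<mu> is feasible, and any feasible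
  z* + \<tau> \<mu> with \<tau> < s would, again by (i), produce an admissible value dominating z.
  Hence \<Theta>(\<mu>) = s and z \<in> \<Sigma>. The side constraint s \<mu>(1) < m_prop holds because
  the masses of admissible trajectories lie in (m_dry, m_dry + m_prop].\<close>

lemma Pi_KC_initial_in_Kset:
  assumes "(r, u) \<in> Pi_KC P r0 tf"
  shows "r0 \<in> Kset P"
proof -
  have "r 0 = r0" using assms by (simp add: Pi_KC_def Pi_traj_def)
  moreover have "r 0 \<in> Kset P" using assms by (simp add: Pi_KC_def)
  ultimately show ?thesis by simp
qed

lemma adm_values_bounds:
  assumes "w \<in> adm_values P r0"
  shows "- mmax P \<le> w $ 1" and "w $ 1 < - mmin P" and "0 \<le> w $ 2"
proof -
  obtain tf r u where w: "w = Jobj (r 1) tf" "tf \<ge> 0" "(r, u) \<in> Pi_KC P r0 tf"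
    using assms unfolding adm_values_def by blast
  then have "r 1 \<in> K0 P" by (simp add: Pi_KC_def Kset_def)
  then have "mmin P < r 1 $ 7" "r 1 $ 7 \<le> mmax P" by (simp_all add: K0_def)
  then show "- mmax P \<le> w $ 1" "w $ 1 < - mmin P" "0 \<le> w $ 2"
    using w by (simp_all add: Jobj_def)
qed

lemma utopia_component:
  "utopia P r0 $ i = Inf ((\<lambda>w. w $ i) ` adm_values P r0)"
proof -
  have "{Jobj (r 1) tf $ i | tf r u. (r0, tf) \<in> pi_set P \<and> (r, u) \<in> Pi_KC P r0 tf}
        = (\<lambda>w. w $ i) ` adm_values P r0"
    unfolding adm_values_def pi_set_def by (auto dest: Pi_KC_initial_in_Kset)
  then show ?thesis by (simp add: utopia_def)
qed

lemma utopia_le_adm_value: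
  assumes "w \<in> adm_values P r0"
  shows "utopia P r0 \<le> w"
  unfolding less_eq_vec_def
proof
  fix i :: 2
  have "bdd_below ((\<lambda>w. w $ i) ` adm_values P r0)"
  proof (rule bdd_belowI2)
    fix v assume "v \<in> adm_values P r0"
    then have "- mmax P \<le> v $ 1" "0 \<le> v $ 2" by (rule adm_values_bounds)+
    then show "min (- mmax P) 0 \<le> v $ i"
      using exhaust_2[of i] by auto
  qed
  then show "utopia P r0 $ i \<le> w $ i"
    unfolding utopia_component using assms by (auto intro: cInf_lower)
qed

lemma utopia_fst_ge:
  assumes "adm_values P r0 \<noteq> {}"
  shows "- mmax P \<le> utopia P r0 $ 1"
  unfolding utopia_component using assms
  by (auto intro!: cInf_greatest dest: adm_values_bounds(1))

lemma adm_value_fst_gap: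
  assumes "w \<in> adm_values P r0"
  shows "(w - utopia P r0) $ 1 < mprop P"
proof -
  have "- mmax P \<le> utopia P r0 $ 1" using assms by (intro utopia_fst_ge) auto
  then show ?thesis using adm_values_bounds(2)[OF assms] by (simp add: mmin_def mmax_def)
qed

lemma nonneg_vec2_eq_scaled_simplex:
  fixes d :: "real^2"
  assumes "0 \<le> d"
  obtains s \<mu> where "0 \<le> s" "0 \<le> \<mu>" "\<mu> $ 1 + \<mu> $ 2 = 1" "d = s *\<^sub>R \<mu>"
proof (cases "d = 0")
  case True
  show ?thesis
    by (rule that[of 0 "vector [1, 0]"]) (use True in \<open>simp_all add: less_eq_vec_def forall_2\<close>)
next
  case False
  define s where "s = d $ 1 + d $ 2"
  have d: "0 \<le> d $ 1" "0 \<le> d $ 2" using assms by (simp_all add: less_eq_vec_def)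
  have s: "0 < s"
  proof (rule ccontr)
    assume "\<not> 0 < s"
    with d have "d $ 1 = 0" "d $ 2 = 0" unfolding s_def by linarith+
    then have "d = 0" by (simp add: vec_eq_iff forall_2)
    with False show False ..
  qed
  show ?thesis
  proof (rule that[of s "(1 / s) *\<^sub>R d"])
    show "0 \<le> (1 / s) *\<^sub>R d" using assms s by (intro scaleR_nonneg_nonneg) simp_all
    show "((1 / s) *\<^sub>R d) $ 1 + ((1 / s) *\<^sub>R d) $ 2 = 1"
      using s unfolding s_def by (simp flip: add_divide_distrib)
  qed (use s in auto)
qed

lemma pareto_front_feasible_le_eq:
  assumes "z \<in> pareto_front P r0"
    and th_i: "\<And>z. th r0 z \<le> 0 \<longleftrightarrow>
                 (\<exists>tf \<ge> 0. \<exists>r u. (r, u) \<in> Pi_KC P r0 tf \<and> Jobj (r 1) tf \<le> z)"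
    and "th r0 v \<le> 0" and "v \<le> z"
  shows "v = z"
proof -
  obtain tf r u where "tf \<ge> 0" "(r, u) \<in> Pi_KC P r0 tf" and wv: "Jobj (r 1) tf \<le> v"
    using th_i assms(3) by blast
  then have "Jobj (r 1) tf \<in> adm_values P r0" by (auto simp: adm_values_def)
  moreover have "Jobj (r 1) tf \<le> z" using wv assms(4) by (rule order_trans)
  ultimately have "Jobj (r 1) tf = z" using assms(1) by (auto simp: pareto_front_def)
  then show ?thesis using wv assms(4) by simp
qed

lemma Theta_at_pareto_point:
  assumes z: "z \<in> pareto_front P r0"
    and th_i: "\<And>z. th r0 z \<le> 0 \<longleftrightarrow>
                 (\<exists>tf \<ge> 0. \<exists>r u. (r, u) \<in> Pi_KC P r0 tf \<and> Jobj (r 1) tf \<le> z)"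
    and zs: "z = utopia P r0 + s *\<^sub>R \<mu>" and "0 \<le> s"
    and "0 \<le> \<mu>" and "\<mu> \<noteq> 0" and "s * \<mu> $ 1 < mprop P"
  shows "Theta P th r0 \<mu> = ereal s"
proof -
  let ?S = "{\<tau>. \<tau> \<ge> 0 \<and> th r0 (utopia P r0 + \<tau> *\<^sub>R \<mu>) \<le> 0 \<and> \<tau> * \<mu> $ 1 < mprop P}"
  have "th r0 z \<le> 0"
    using z th_i by (auto simp: pareto_front_def adm_values_def)
  then have s_in: "s \<in> ?S" using zs assms(4,7) by simp
  have s_le: "s \<le> \<tau>" if "\<tau> \<in> ?S" for \<tau>
  proof (rule ccontr)
    assume "\<not> s \<le> \<tau>"
    then have "utopia P r0 + \<tau> *\<^sub>R \<mu> \<le> z"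
      using zs \<open>0 \<le> \<mu>\<close> by (auto simp: less_eq_vec_def intro: mult_right_mono)
    then have "utopia P r0 + \<tau> *\<^sub>R \<mu> = z"
      using pareto_front_feasible_le_eq[where th = th, OF z th_i] that by blast
    with zs have "\<tau> *\<^sub>R \<mu> = s *\<^sub>R \<mu>" by simp
    with \<open>\<not> s \<le> \<tau>\<close> \<open>\<mu> \<noteq> 0\<close> show False by auto
  qed
  show ?thesis unfolding Theta_def
  proof (rule antisym)
    show "Inf (ereal ` ?S) \<le> ereal s" using s_in by (intro Inf_lower) simp
    show "ereal s \<le> Inf (ereal ` ?S)" using s_le by (intro Inf_greatest) auto
  qed
qed

theorem lemma1:
  fixes P :: params and U :: "real^3 \<Rightarrow> real"
    and th :: "real^7 \<Rightarrow> real^2 \<Rightarrow> real" and r0 :: "real^7"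
  assumes "Om P \<ge> 0" and "ve P > 0" and "mdry P > 0" and "mprop P > 0"
    and "0 < rhomin P" and "rhomin P < rhomax P" and "eps P > 0"
    and "\<And>p. ((\<lambda>s. U (p + s *\<^sub>R axis 1 1)) has_real_derivative Ux P p) (at 0)"
    and "\<And>p. ((\<lambda>s. U (p + s *\<^sub>R axis 2 1)) has_real_derivative Uy P p) (at 0)"
    and "\<And>p. ((\<lambda>s. U (p + s *\<^sub>R axis 3 1)) has_real_derivative Uz P p) (at 0)"
    and "Cset P \<noteq> {}" and "closed (Cset P)"
    and th_i: "\<And>z. th r0 z \<le> 0 \<longleftrightarrow>
                 (\<exists>tf \<ge> 0. \<exists>r u. (r, u) \<in> Pi_KC P r0 tf \<and> Jobj (r 1) tf \<le> z)"
    and th_ii: "\<And>z z'. z \<le> z' \<Longrightarrow> th r0 z \<ge> th r0 z'"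
  shows "pareto_front P r0 \<subseteq> Sigma_set P th r0"
proof
  fix z assume z: "z \<in> pareto_front P r0"
  then have adm: "z \<in> adm_values P r0" by (simp add: pareto_front_def)
  then have "0 \<le> z - utopia P r0" by (simp add: utopia_le_adm_value)
  then obtain s \<mu> where s: "0 \<le> s" and \<mu>: "0 \<le> \<mu>" "\<mu> $ 1 + \<mu> $ 2 = 1"
    and zs: "z - utopia P r0 = s *\<^sub>R \<mu>"
    by (rule nonneg_vec2_eq_scaled_simplex)
  have z_eq: "z = utopia P r0 + s *\<^sub>R \<mu>" using zs by (metis add.commute diff_add_cancel)
  have "\<mu> \<noteq> 0" using \<mu>(2) by auto
  moreover have "s * \<mu> $ 1 < mprop P"
    using adm_value_fst_gap[OF adm] zs by simp
  ultimately have "Theta P th r0 \<mu> = ereal s"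
    using Theta_at_pareto_point[where th = th, OF z th_i z_eq s \<mu>(1)] by simp
  moreover have "\<forall>i. \<mu> $ i \<in> {0..1}"
    using \<mu> by (auto simp: less_eq_vec_def forall_2)
  ultimately show "z \<in> Sigma_set P th r0"
    unfolding Sigma_set_def using z_eq \<mu>(2) by (auto intro!: exI[of _ \<mu>])
qed

end
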